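(* Let $a\ge1$. There is a constant $c$ depending only on $d$ and $a$ such that for all $t>0$ and $x,z\in\mathbb{R}^d$ with $|z|\le [a\,h_0^{-1}(3/t)]\vee\frac{|x|}{2}$, $$\rho_t(x+z)\le c\,\rho_t(x).$$
   Context: $\nu_0\colon[0,\infty)\to[0,\infty]$ is non-increasing with $\int_{\mathbb{R}^d}(1\wedge|x|^2)\nu_0(|x|)dx<\infty$ and $\int_{\mathbb{R}^d}\nu_0(|x|)dx=\infty$. For $r>0$: $h_0(r)=\int_{\mathbb{R}^d}(1\wedge|x|^2/r^2)\nu_0(|x|)dx$, $K_0(r)=r^{-2}\int_{|x|<r}|x|^2\nu_0(|x|)dx$; $h_0$ is continuous and strictly decreasing from $\infty$ to $0$, with inverse $h_0^{-1}$. For $t>0$, $x\in\mathbb{R}^d$: $\rho_t(x)=[h_0^{-1}(1/t)]^{-d}\wedge\frac{tK_0(|x|)}{|x|^d}$ (equal to $[h_0^{-1}(1/t)]^{-d}$ at $x=0$). *)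

theory Defs
  imports "HOL-Analysis.Analysis"
begin

text \<open>The radial profile nu0 : [0,oo) -> [0,oo] is modelled as a function real => ennreal;
  only its values on [0,oo) matter. Space R^d is a euclidean_space type 'a, d = DIM('a).\<close>

definition levy_profile :: "('a::euclidean_space itself) \<Rightarrow> (real \<Rightarrow> ennreal) \<Rightarrow> bool" where
  "levy_profile _ \<nu> \<longleftrightarrow>
     (\<forall>s u. 0 \<le> s \<longrightarrow> s \<le> u \<longrightarrow> \<nu> u \<le> \<nu> s) \<and>
     (\<integral>\<^sup>+ x. ennreal (min 1 ((norm (x::'a))\<^sup>2)) * \<nu> (norm x) \<partial>lborel) < \<infinity> \<and>
     (\<integral>\<^sup>+ x. \<nu> (norm (x::'a)) \<partial>lborel) = \<infinity>"

definition h0 :: "('a::euclidean_space itself) \<Rightarrow> (real \<Rightarrow> ennreal) \<Rightarrow> real \<Rightarrow> real" where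
  "h0 _ \<nu> r = enn2real (\<integral>\<^sup>+ x. ennreal (min 1 ((norm (x::'a))\<^sup>2 / r\<^sup>2)) * \<nu> (norm x) \<partial>lborel)"

definition K0 :: "('a::euclidean_space itself) \<Rightarrow> (real \<Rightarrow> ennreal) \<Rightarrow> real \<Rightarrow> real" where
  "K0 _ \<nu> r = enn2real (\<integral>\<^sup>+ x. indicator {x. norm x < r} x * ennreal ((norm (x::'a))\<^sup>2) * \<nu> (norm x) \<partial>lborel) / r\<^sup>2"

text \<open>Inverse of the (continuous, strictly decreasing, onto (0,oo)) function h0 on (0,oo).\<close>
definition h0_inv :: "('a::euclidean_space itself) \<Rightarrow> (real \<Rightarrow> ennreal) \<Rightarrow> real \<Rightarrow> real" where
  "h0_inv T \<nu> s = (THE r. 0 < r \<and> h0 T \<nu> r = s)"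

definition rho :: "(real \<Rightarrow> ennreal) \<Rightarrow> real \<Rightarrow> 'a::euclidean_space \<Rightarrow> real" where
  "rho \<nu> t x =
     (if x = 0 then (1 / h0_inv TYPE('a) \<nu> (1/t)) ^ DIM('a)
      else min ((1 / h0_inv TYPE('a) \<nu> (1/t)) ^ DIM('a))
               (t * K0 TYPE('a) \<nu> (norm x) / (norm x) ^ DIM('a)))"

end

theory Submission
  imports Defs
begin

text \<open>
  The heart of the matter is the truncated second moment \<open>M(r) = r\<^sup>2 K\<^sub>0(r)\<close>. Since \<open>\<nu>\<^sub>0\<close> is
  non-increasing, scaling gives \<open>M(\<mu> r) \<le> \<mu>\<^sup>d\<^sup>+\<^sup>2 M(r)\<close> for \<open>\<mu> \<ge> 1\<close>, so \<open>K\<^sub>0(r)/r\<^sup>d\<close> is almost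
  decreasing, and the annulus \<open>r/2 \<le> |x| < r\<close> gives \<open>\<nu>\<^sub>0(r) \<lesssim> K\<^sub>0(r)/r\<^sup>d\<close>.
  If \<open>|z| \<le> |x|/2\<close> then \<open>|x+z| \<ge> |x|/2\<close> and almost monotonicity bounds \<open>\<rho>\<^sub>t(x+z)\<close> directly.
  Otherwise \<open>|x| \<le> 2a R\<close> with \<open>R = h\<^sub>0\<^sup>-\<^sup>1(3/t) \<le> r = h\<^sub>0\<^sup>-\<^sup>1(1/t)\<close>, and it suffices to show that
  \<open>\<rho>\<^sub>t(x)\<close> is comparable to its maximal value \<open>r\<^sup>-\<^sup>d\<close>. Splitting the integral defining
  \<open>h\<^sub>0(R)\<close> at \<open>R\<close> and \<open>r\<close> gives \<open>3/t = h\<^sub>0(R) \<le> K\<^sub>0(R) + \<omega>\<^sub>d r\<^sup>d sup\<^bsub>[R,r)\<^esub> \<nu>\<^sub>0 + h\<^sub>0(r)\<close>,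
  and the first two terms on the right are each \<open>\<lesssim> r\<^sup>d K\<^sub>0(|x|)/|x|\<^sup>d\<close>, whence \<open>r\<^sup>-\<^sup>d \<lesssim> t K\<^sub>0(|x|)/|x|\<^sup>d\<close>.
  This uses \<open>h\<^sub>0(h0_inv v) = v\<close>, which needs \<open>h\<^sub>0\<close> to be a continuous strictly decreasing
  bijection of \<open>(0,\<infinity>)\<close>: strictness comes from \<open>K\<^sub>0 > 0\<close>, i.e. from \<open>\<integral>\<nu>\<^sub>0 = \<infinity>\<close>.
\<close>

lemma levy_profile_antimono:
  "levy_profile TYPE('a::euclidean_space) \<nu> \<Longrightarrow> antimono_on {0..} \<nu>"
  unfolding levy_profile_def monotone_on_def by auto

lemma borel_measurable_radial:
  fixes \<nu> :: "real \<Rightarrow> ennreal"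
  assumes "antimono_on {0..} \<nu>"
  shows "(\<lambda>x::'a::euclidean_space. \<nu> (norm x)) \<in> borel_measurable borel"
proof (rule borel_measurableI_greater)
  fix c :: ennreal
  let ?S = "{u::real. 0 \<le> u \<and> c < \<nu> u}"
  have "is_interval ?S"
    unfolding is_interval_1
  proof (intro ballI allI impI, elim conjE)
    fix u v w assume "u \<in> ?S" "v \<in> ?S" "u \<le> w" "w \<le> v"
    then show "w \<in> ?S" using assms unfolding monotone_on_def
      by (metis (mono_tags, lifting) atLeast_iff dual_order.trans mem_Collect_eq order_less_le_trans)
  qed
  then have "norm -` ?S \<in> sets (borel :: 'a measure)"
    using real_interval_borel_measurable borel_measurable_norm measurable_sets_borel by blast
  moreover have "{x::'a \<in> space borel. c < \<nu> (norm x)} = norm -` ?S" by auto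
  ultimately show "{x::'a \<in> space borel. c < \<nu> (norm x)} \<in> sets borel" by simp
qed

lemma borel_measurable_times_radial:
  fixes \<nu> :: "real \<Rightarrow> ennreal"
  assumes "antimono_on {0..} \<nu>" "g \<in> borel_measurable borel"
  shows "(\<lambda>x::'a::euclidean_space. g x * \<nu> (norm x)) \<in> borel_measurable borel"
  by (rule borel_measurable_times_ennreal[OF assms(2) borel_measurable_radial[OF assms(1)]])

lemma nn_integral_lborel_scaleR:
  fixes f :: "'a::euclidean_space \<Rightarrow> ennreal"
  assumes [measurable]: "f \<in> borel_measurable borel" and "c \<noteq> 0"
  shows "(\<integral>\<^sup>+x. f x \<partial>lborel) = ennreal (\<bar>c\<bar> ^ DIM('a)) * (\<integral>\<^sup>+x. f (c *\<^sub>R x) \<partial>lborel)"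
  by (subst lborel_affine[OF \<open>c \<noteq> 0\<close>, of 0])
     (simp add: nn_integral_density nn_integral_distr nn_integral_cmult)

lemma levy_profile_nn_integral_finite:
  assumes "levy_profile TYPE('a::euclidean_space) \<nu>" "g \<in> borel_measurable borel"
    and "\<And>x. g x \<le> C * min 1 ((norm x)\<^sup>2)"
  shows "(\<integral>\<^sup>+ x. ennreal (g (x::'a)) * \<nu> (norm x) \<partial>lborel) < \<infinity>"
proof -
  note [measurable] = assms(2) borel_measurable_radial[OF levy_profile_antimono[OF assms(1)]]
  have "(\<integral>\<^sup>+ x. ennreal (g (x::'a)) * \<nu> (norm x) \<partial>lborel)
      \<le> (\<integral>\<^sup>+ x. ennreal (max 0 C) * (ennreal (min 1 ((norm (x::'a))\<^sup>2)) * \<nu> (norm x)) \<partial>lborel)"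
  proof (intro nn_integral_mono)
    fix x :: 'a
    have "g x \<le> max 0 C * min 1 ((norm x)\<^sup>2)"
      using assms(3)[of x] by (smt (verit) mult_right_mono zero_le_power2 min_def)
    then have "ennreal (g x) \<le> ennreal (max 0 C) * ennreal (min 1 ((norm x)\<^sup>2))"
      by (simp add: ennreal_mult'[symmetric] ennreal_leI)
    then show "ennreal (g x) * \<nu> (norm x) \<le> ennreal (max 0 C) * (ennreal (min 1 ((norm x)\<^sup>2)) * \<nu> (norm x))"
      by (metis mult.assoc mult_right_mono zero_le)
  qed
  also have "\<dots> = ennreal (max 0 C) * (\<integral>\<^sup>+ x. ennreal (min 1 ((norm (x::'a))\<^sup>2)) * \<nu> (norm x) \<partial>lborel)"
    by (intro nn_integral_cmult) measurable
  also have "\<dots> < \<infinity>"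
    using assms(1) unfolding levy_profile_def by (simp add: ennreal_mult_less_top)
  finally show ?thesis .
qed

definition ball_moment :: "'a::euclidean_space itself \<Rightarrow> (real \<Rightarrow> ennreal) \<Rightarrow> real \<Rightarrow> ennreal" where
  "ball_moment _ \<nu> r =
     (\<integral>\<^sup>+ x. indicator {x. norm x < r} x * ennreal ((norm (x::'a))\<^sup>2) * \<nu> (norm x) \<partial>lborel)"

lemma borel_measurable_ball_moment_integrand:
  fixes \<nu> :: "real \<Rightarrow> ennreal"
  assumes "antimono_on {0..} \<nu>"
  shows "(\<lambda>x::'a::euclidean_space. indicator {x. norm x < r} x * ennreal ((norm x)\<^sup>2) * \<nu> (norm x))
           \<in> borel_measurable borel"
  by (rule borel_measurable_times_radial[OF assms]) measurable

lemma ball_moment_mono: "r \<le> s \<Longrightarrow> ball_moment T \<nu> r \<le> ball_moment T \<nu> s"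
  unfolding ball_moment_def
  by (intro nn_integral_mono mult_right_mono) (auto simp: indicator_def)

lemma ball_moment_finite:
  assumes "levy_profile TYPE('a::euclidean_space) \<nu>"
  shows "ball_moment TYPE('a) \<nu> r < \<infinity>"
proof -
  let ?g = "\<lambda>x::'a. indicator {x. norm x < r} x * (norm x)\<^sup>2"
  have bound: "?g x \<le> max 1 (r\<^sup>2) * min 1 ((norm x)\<^sup>2)" for x
  proof (cases "norm x < r")
    case True
    show ?thesis
    proof (cases "norm x \<le> 1")
      case True
      then have "min 1 ((norm x)\<^sup>2) = (norm x)\<^sup>2" by (simp add: power_le_one)
      then show ?thesis using \<open>norm x < r\<close> by (simp add: mult_le_cancel_right1)
    next
      case False
      then have "(norm x)\<^sup>2 \<le> r\<^sup>2" "\<not> (norm x)\<^sup>2 \<le> 1" using \<open>norm x < r\<close>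
        by (auto intro: power_mono simp: abs_square_le_1)
      then show ?thesis using True by auto
    qed
  qed simp
  have "ball_moment TYPE('a) \<nu> r = (\<integral>\<^sup>+ x. ennreal (?g x) * \<nu> (norm x) \<partial>lborel)"
    unfolding ball_moment_def by (intro nn_integral_cong) (simp add: indicator_def)
  also have "\<dots> < \<infinity>"
    by (rule levy_profile_nn_integral_finite[OF assms _ bound]) measurable
  finally show ?thesis .
qed

lemma ball_moment_eq_K0:
  assumes "levy_profile TYPE('a::euclidean_space) \<nu>" "r \<noteq> 0"
  shows "ball_moment TYPE('a) \<nu> r = ennreal (r\<^sup>2 * K0 TYPE('a) \<nu> r)"
  using ball_moment_finite[OF assms(1), of r] assms(2)
  unfolding K0_def ball_moment_def by (simp add: ennreal_enn2real_if)

lemma ball_moment_scale: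
  fixes \<nu> :: "real \<Rightarrow> ennreal"
  assumes "antimono_on {0..} \<nu>" "1 \<le> \<mu>"
  shows "ball_moment TYPE('a::euclidean_space) \<nu> (\<mu> * r)
           \<le> ennreal (\<mu> ^ (DIM('a) + 2)) * ball_moment TYPE('a) \<nu> r"
proof -
  note [measurable] = borel_measurable_radial[OF assms(1)]
  let ?f = "\<lambda>r (x::'a). indicator {x. norm x < r} x * ennreal ((norm x)\<^sup>2) * \<nu> (norm x)"
  have pointwise: "?f (\<mu> * r) (\<mu> *\<^sub>R x) \<le> ennreal (\<mu>\<^sup>2) * ?f r x" for x
  proof -
    have n: "norm (\<mu> *\<^sub>R x) = \<mu> * norm x" using assms(2) by simp
    have "\<nu> (\<mu> * norm x) \<le> \<nu> (norm x)"
      using assms by (intro monotone_onD[OF assms(1)]) (auto simp: mult_le_cancel_right1)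
    moreover have "ennreal ((\<mu> * norm x)\<^sup>2) = ennreal (\<mu>\<^sup>2) * ennreal ((norm x)\<^sup>2)"
      by (simp add: ennreal_mult'[symmetric] power_mult_distrib)
    ultimately show ?thesis
      using assms(2) by (simp add: n indicator_def mult_right_mono mult_ac)
  qed
  have "ball_moment TYPE('a) \<nu> (\<mu> * r) = ennreal (\<mu> ^ DIM('a)) * (\<integral>\<^sup>+x. ?f (\<mu> * r) (\<mu> *\<^sub>R x) \<partial>lborel)"
    unfolding ball_moment_def using assms(2) by (subst nn_integral_lborel_scaleR[of _ \<mu>]) auto
  also have "\<dots> \<le> ennreal (\<mu> ^ DIM('a)) * (\<integral>\<^sup>+x. ennreal (\<mu>\<^sup>2) * ?f r x \<partial>lborel)"
    by (intro mult_left_mono nn_integral_mono pointwise) auto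
  also have "\<dots> = ennreal (\<mu> ^ DIM('a)) * ennreal (\<mu>\<^sup>2) * ball_moment TYPE('a) \<nu> r"
    unfolding ball_moment_def by (subst nn_integral_cmult) (auto simp: mult.assoc)
  also have "\<dots> = ennreal (\<mu> ^ (DIM('a) + 2)) * ball_moment TYPE('a) \<nu> r"
    using assms(2) by (simp add: ennreal_mult'[symmetric] power_add power2_eq_square mult_ac)
  finally show ?thesis .
qed

text \<open>The annulus \<open>s/2 \<le> |x| < s\<close> has volume \<open>\<omega>\<^sub>d s\<^sup>d (1 - 2\<^sup>-\<^sup>d)\<close>, and \<open>|x|\<^sup>2 \<ge> s\<^sup>2/4\<close> on it.\<close>
definition annulus_const :: "nat \<Rightarrow> real" where
  "annulus_const d = unit_ball_vol (real d) * (1 - (1/2)^d) / 4"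

lemma annulus_const_pos: "0 < d \<Longrightarrow> 0 < annulus_const d"
  unfolding annulus_const_def by (simp add: power_less_one_iff)

lemma emeasure_annulus:
  assumes "0 < s"
  shows "emeasure lborel (ball (0::'a::euclidean_space) s - ball 0 (s/2))
           = ennreal (unit_ball_vol (real DIM('a)) * s ^ DIM('a) * (1 - (1/2) ^ DIM('a)))"
proof -
  let ?w = "unit_ball_vol (real DIM('a))"
  have "emeasure lborel (ball (0::'a) s - ball 0 (s/2))
      = emeasure lborel (ball (0::'a) s) - emeasure lborel (ball (0::'a) (s/2))"
    using emeasure_lborel_ball_finite[of "0::'a" "s/2"] assms by (intro emeasure_Diff) auto
  also have "\<dots> = ennreal (?w * s ^ DIM('a) - ?w * (s/2) ^ DIM('a))"
    using assms by (simp add: emeasure_ball ennreal_minus)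
  finally show ?thesis by (simp add: power_divide field_simps)
qed

lemma ball_moment_ge_profile:
  fixes \<nu> :: "real \<Rightarrow> ennreal"
  assumes "antimono_on {0..} \<nu>" "0 < s"
  shows "\<nu> s * ennreal (annulus_const DIM('a) * s ^ (DIM('a) + 2)) \<le> ball_moment TYPE('a::euclidean_space) \<nu> s"
proof -
  let ?S = "ball (0::'a) s - ball 0 (s/2)"
  have "(\<integral>\<^sup>+x. (ennreal (s\<^sup>2/4) * \<nu> s) * indicator ?S x \<partial>lborel) \<le> ball_moment TYPE('a) \<nu> s"
    unfolding ball_moment_def
  proof (rule nn_integral_mono)
    fix x :: 'a
    show "ennreal (s\<^sup>2/4) * \<nu> s * indicator ?S x \<le> indicator {x. norm x < s} x * ennreal ((norm x)\<^sup>2) * \<nu> (norm x)"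
    proof (cases "x \<in> ?S")
      case True
      then have h: "norm x < s" "s/2 \<le> norm x" by auto
      have "s\<^sup>2/4 \<le> (norm x)\<^sup>2"
        using power_mono[OF h(2), of 2] assms by (simp add: power_divide)
      moreover have "\<nu> s \<le> \<nu> (norm x)"
        using h assms by (intro monotone_onD[OF assms(1)]) auto
      ultimately show ?thesis using True h by (simp add: mult_mono ennreal_leI mult.commute)
    qed simp
  qed
  moreover have "(\<integral>\<^sup>+x. (ennreal (s\<^sup>2/4) * \<nu> s) * indicator ?S x \<partial>lborel) = ennreal (s\<^sup>2/4) * \<nu> s * emeasure lborel ?S"
    by (rule nn_integral_cmult_indicator) simp
  ultimately have "\<nu> s * (ennreal (s\<^sup>2/4) * emeasure lborel ?S) \<le> ball_moment TYPE('a) \<nu> s"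
    by (simp add: mult_ac)
  moreover have "ennreal (s\<^sup>2/4) * emeasure lborel ?S = ennreal (annulus_const DIM('a) * s ^ (DIM('a) + 2))"
    using assms unfolding emeasure_annulus[OF assms(2)] annulus_const_def
    by (subst ennreal_mult'[symmetric]) (auto simp: power_add power2_eq_square field_simps)
  ultimately show ?thesis by simp
qed

lemma K0_nonneg: "0 \<le> K0 T \<nu> r"
  unfolding K0_def by simp

lemma K0_mono_sq:
  assumes "levy_profile TYPE('a::euclidean_space) \<nu>" "0 < r" "r \<le> s"
  shows "r\<^sup>2 * K0 TYPE('a) \<nu> r \<le> s\<^sup>2 * K0 TYPE('a) \<nu> s"
  using ball_moment_mono[OF assms(3), of "TYPE('a)" \<nu>] assms
  by (simp add: ball_moment_eq_K0 K0_nonneg)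

lemma K0_scale:
  assumes "levy_profile TYPE('a::euclidean_space) \<nu>" "0 < r" "1 \<le> \<mu>"
  shows "K0 TYPE('a) \<nu> (\<mu> * r) \<le> \<mu> ^ DIM('a) * K0 TYPE('a) \<nu> r"
proof -
  have "ennreal ((\<mu> * r)\<^sup>2 * K0 TYPE('a) \<nu> (\<mu> * r)) \<le> ennreal (\<mu> ^ (DIM('a) + 2) * (r\<^sup>2 * K0 TYPE('a) \<nu> r))"
    using ball_moment_scale[where 'a='a, OF levy_profile_antimono[OF assms(1)] assms(3), of r] assms
    by (simp add: ball_moment_eq_K0 ennreal_mult')
  then have "(\<mu> * r)\<^sup>2 * K0 TYPE('a) \<nu> (\<mu> * r) \<le> \<mu> ^ (DIM('a) + 2) * (r\<^sup>2 * K0 TYPE('a) \<nu> r)"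
    using assms by (simp add: ennreal_le_iff K0_nonneg)
  then show ?thesis
    using assms by (simp add: power_add power_mult_distrib power2_eq_square field_simps)
qed

lemma K0_div_power_almost_antimono:
  assumes "levy_profile TYPE('a::euclidean_space) \<nu>" "1 \<le> l" "0 < r" "r / l \<le> s"
  shows "K0 TYPE('a) \<nu> s / s ^ DIM('a) \<le> l ^ (DIM('a) + 2) * (K0 TYPE('a) \<nu> r / r ^ DIM('a))"
proof -
  let ?d = "DIM('a)" and ?K = "K0 TYPE('a) \<nu>"
  have s2: "r \<le> l * s" using assms by (simp add: field_simps)
  then have s: "0 < s" "r \<le> l * s" using assms zero_less_mult_pos[of l s] by auto
  have "?K s / s ^ ?d \<le> ?K r / r ^ ?d * (r / s) ^ (?d + 2)" if "s \<le> r"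
  proof -
    have "s\<^sup>2 * ?K s \<le> r\<^sup>2 * ?K r" by (rule K0_mono_sq[OF assms(1) s(1) that])
    then show ?thesis using s assms(3) by (simp add: power_add power_divide power2_eq_square field_simps)
  qed
  moreover have "?K s / s ^ ?d \<le> ?K r / r ^ ?d" if "r \<le> s"
  proof -
    have "?K ((s / r) * r) \<le> (s / r) ^ ?d * ?K r"
      using that assms by (intro K0_scale[OF assms(1)]) auto
    then show ?thesis using assms(3) that by (simp add: power_divide field_simps)
  qed
  moreover have "(r / s) ^ (?d + 2) \<le> l ^ (?d + 2)"
    using s assms by (intro power_mono) (auto simp: field_simps)
  moreover have "1 \<le> l ^ (?d + 2)" using assms(2) by (rule one_le_power)
  ultimately show ?thesis
    using K0_nonneg[of "TYPE('a)" \<nu> r] assms(3)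
    by (smt (verit, best) divide_nonneg_pos mult_le_cancel_left1 mult_left_mono mult.commute zero_less_power)
qed

lemma profile_le_K0:
  assumes "levy_profile TYPE('a::euclidean_space) \<nu>" "0 < s"
  shows "\<nu> s \<le> ennreal (K0 TYPE('a) \<nu> s / (annulus_const DIM('a) * s ^ DIM('a)))"
proof -
  let ?k = "annulus_const DIM('a) * s ^ (DIM('a) + 2)"
  have k: "0 < ?k" using assms(2) annulus_const_pos[of "DIM('a)"] by simp
  have lower: "\<nu> s * ennreal ?k \<le> ennreal (s\<^sup>2 * K0 TYPE('a) \<nu> s)"
    using ball_moment_ge_profile[where 'a='a, OF levy_profile_antimono[OF assms(1)] assms(2)] assms
    by (simp add: ball_moment_eq_K0)
  then have "\<nu> s \<noteq> \<infinity>"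
    using annulus_const_pos[of "DIM('a)"] assms(2) by (intro notI) (simp add: ennreal_top_mult top_unique)
  then obtain q where q: "\<nu> s = ennreal q" "0 \<le> q" by (cases "\<nu> s") auto
  then have "q * ?k \<le> s\<^sup>2 * K0 TYPE('a) \<nu> s"
    using lower k by (simp add: ennreal_mult'[symmetric] ennreal_le_iff K0_nonneg)
  then have "q \<le> K0 TYPE('a) \<nu> s / (annulus_const DIM('a) * s ^ DIM('a))"
    using annulus_const_pos[of "DIM('a)"] assms(2) by (simp add: power_add power2_eq_square field_simps)
  then show ?thesis using q by (simp add: ennreal_leI)
qed

lemma K0_pos:
  assumes "levy_profile TYPE('a::euclidean_space) \<nu>" "0 < s"
  shows "0 < K0 TYPE('a) \<nu> s"
proof (rule ccontr)
  assume "\<not> 0 < K0 TYPE('a) \<nu> s"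
  then have K0: "K0 TYPE('a) \<nu> s = 0" using K0_nonneg[of "TYPE('a)" \<nu> s] by simp
  have vanish: "\<nu> u = 0" if "0 < u" for u
  proof (cases "u \<le> s")
    case True
    have "K0 TYPE('a) \<nu> u = 0"
      using K0_mono_sq[OF assms(1) that True] K0 K0_nonneg[of "TYPE('a)" \<nu> u] that
      by (simp add: mult_le_0_iff)
    then show ?thesis using profile_le_K0[OF assms(1) that] that by simp
  next
    case False
    have "\<nu> s = 0" using profile_le_K0[OF assms] K0 by simp
    then show ?thesis
      using False assms monotone_onD[OF levy_profile_antimono[OF assms(1)], of s u] by simp
  qed
  have "AE x in lborel. \<nu> (norm (x::'a)) = 0"
    using AE_lborel_singleton[of "0::'a"] by eventually_elim (simp add: vanish)
  then have "(\<integral>\<^sup>+ x. \<nu> (norm (x::'a)) \<partial>lborel) = 0"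
    by (simp add: nn_integral_cong_AE)
  then show False using assms(1) unfolding levy_profile_def by simp
qed

lemma h0_nonneg: "0 \<le> h0 T \<nu> r"
  unfolding h0_def by simp

lemma ennreal_h0:
  assumes "levy_profile TYPE('a::euclidean_space) \<nu>" "0 < r"
  shows "ennreal (h0 TYPE('a) \<nu> r) = (\<integral>\<^sup>+ x. ennreal (min 1 ((norm (x::'a))\<^sup>2 / r\<^sup>2)) * \<nu> (norm x) \<partial>lborel)"
proof -
  have "min 1 ((norm x)\<^sup>2 / r\<^sup>2) \<le> max 1 (1/r\<^sup>2) * min 1 ((norm x)\<^sup>2)" for x :: 'a
  proof (cases "(norm x)\<^sup>2 \<le> 1")
    case True
    have "min 1 ((norm x)\<^sup>2 / r\<^sup>2) \<le> (1/r\<^sup>2) * (norm x)\<^sup>2" by simp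
    also have "\<dots> \<le> max 1 (1/r\<^sup>2) * (norm x)\<^sup>2" by (intro mult_right_mono) auto
    finally show ?thesis using True by simp
  qed simp
  then have "(\<integral>\<^sup>+ x. ennreal (min 1 ((norm (x::'a))\<^sup>2 / r\<^sup>2)) * \<nu> (norm x) \<partial>lborel) < \<infinity>"
    by (intro levy_profile_nn_integral_finite[OF assms(1)]) measurable
  then show ?thesis unfolding h0_def by (simp add: ennreal_enn2real_if)
qed

lemma borel_measurable_h0_integrand:
  fixes \<nu> :: "real \<Rightarrow> ennreal"
  assumes "antimono_on {0..} \<nu>"
  shows "(\<lambda>x::'a::euclidean_space. ennreal (min 1 ((norm x)\<^sup>2 / r\<^sup>2)) * \<nu> (norm x)) \<in> borel_measurable borel"
  by (rule borel_measurable_times_radial[OF assms]) measurable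

lemma h0_antimono:
  assumes "levy_profile TYPE('a::euclidean_space) \<nu>" "0 < r" "r \<le> s"
  shows "h0 TYPE('a) \<nu> s \<le> h0 TYPE('a) \<nu> r"
proof -
  have "(norm x)\<^sup>2 / s\<^sup>2 \<le> (norm x)\<^sup>2 / r\<^sup>2" for x :: 'a
    using assms by (intro divide_left_mono power_mono) auto
  then have "ennreal (h0 TYPE('a) \<nu> s) \<le> ennreal (h0 TYPE('a) \<nu> r)"
    using assms unfolding ennreal_h0[OF assms(1,2)] ennreal_h0[OF assms(1) order.strict_trans2[OF assms(2,3)]]
    by (intro nn_integral_mono mult_right_mono ennreal_leI min.mono) auto
  then show ?thesis by (simp add: ennreal_le_iff h0_nonneg)
qed

lemma h0_mono_sq:
  assumes "levy_profile TYPE('a::euclidean_space) \<nu>" "0 < r" "r \<le> s"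
  shows "r\<^sup>2 * h0 TYPE('a) \<nu> r \<le> s\<^sup>2 * h0 TYPE('a) \<nu> s"
proof -
  note [measurable] = borel_measurable_radial[OF levy_profile_antimono[OF assms(1)]]
  have scaled: "ennreal (q\<^sup>2 * h0 TYPE('a) \<nu> q) = (\<integral>\<^sup>+ x. ennreal (min (q\<^sup>2) ((norm (x::'a))\<^sup>2)) * \<nu> (norm x) \<partial>lborel)"
    if "0 < q" for q
  proof -
    have "ennreal (q\<^sup>2 * h0 TYPE('a) \<nu> q)
        = (\<integral>\<^sup>+ x. ennreal (q\<^sup>2) * (ennreal (min 1 ((norm (x::'a))\<^sup>2 / q\<^sup>2)) * \<nu> (norm x)) \<partial>lborel)"
      using that by (simp add: ennreal_mult' ennreal_h0[OF assms(1)] nn_integral_cmult)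
    also have "\<dots> = (\<integral>\<^sup>+ x. ennreal (min (q\<^sup>2) ((norm (x::'a))\<^sup>2)) * \<nu> (norm x) \<partial>lborel)"
      using that by (intro nn_integral_cong)
        (simp add: ennreal_mult'[symmetric] mult.assoc[symmetric] min_mult_distrib_left)
    finally show ?thesis .
  qed
  have "r\<^sup>2 \<le> s\<^sup>2" using assms by (intro power_mono) auto
  then have "ennreal (r\<^sup>2 * h0 TYPE('a) \<nu> r) \<le> ennreal (s\<^sup>2 * h0 TYPE('a) \<nu> s)"
    unfolding scaled[OF assms(2)] scaled[OF order.strict_trans2[OF assms(2,3)]]
    by (intro nn_integral_mono mult_right_mono ennreal_leI min.mono) auto
  then show ?thesis by (simp add: ennreal_le_iff h0_nonneg)
qed

lemma h0_integrand_gap: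
  fixes x :: "'a::real_normed_vector"
  assumes "0 < s" "s < s'"
  shows "ennreal (min 1 ((norm x)\<^sup>2 / s'\<^sup>2)) * \<nu> (norm x)
       + ennreal (1/s\<^sup>2 - 1/s'\<^sup>2) * (indicator {x. norm x < s} x * ennreal ((norm x)\<^sup>2) * \<nu> (norm x))
     \<le> ennreal (min 1 ((norm x)\<^sup>2 / s\<^sup>2)) * \<nu> (norm x)"
    (is "?H s' x + ennreal ?c * ?M x \<le> ?H s x")
proof -
  have s': "0 < s'" "s\<^sup>2 < s'\<^sup>2" using assms by (auto intro: power_strict_mono)
  then have c: "0 \<le> ?c" using assms by (simp add: field_simps)
  show ?thesis
  proof (cases "norm x < s")
    case True
    then have "(norm x)\<^sup>2 < s\<^sup>2" by (intro power_strict_mono) auto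
    then have "(norm x)\<^sup>2 / s\<^sup>2 \<le> 1" "(norm x)\<^sup>2 / s'\<^sup>2 \<le> 1"
      using True s' assms by (simp_all add: divide_le_eq_1)
    then have "min 1 ((norm x)\<^sup>2 / s\<^sup>2) = (norm x)\<^sup>2 / s\<^sup>2"
      "min 1 ((norm x)\<^sup>2 / s'\<^sup>2) = (norm x)\<^sup>2 / s'\<^sup>2" by auto
    moreover have "(norm x)\<^sup>2 / s'\<^sup>2 + ?c * (norm x)\<^sup>2 = (norm x)\<^sup>2 / s\<^sup>2"
      by (simp add: field_simps)
    then have "ennreal ((norm x)\<^sup>2 / s'\<^sup>2) + ennreal ?c * ennreal ((norm x)\<^sup>2) = ennreal ((norm x)\<^sup>2 / s\<^sup>2)"
      using c by (simp add: ennreal_mult'[symmetric] ennreal_plus[symmetric] del: ennreal_plus)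
    ultimately show ?thesis
      using True by (simp add: distrib_right[symmetric] mult.assoc[symmetric])
  next
    case False
    then have "s\<^sup>2 \<le> (norm x)\<^sup>2" using assms by (intro power_mono) auto
    moreover have "ennreal (min 1 ((norm x)\<^sup>2 / s'\<^sup>2)) * \<nu> (norm x) \<le> 1 * \<nu> (norm x)"
      by (intro mult_right_mono) (auto simp: ennreal_leI)
    ultimately show ?thesis using False assms by simp
  qed
qed

lemma h0_K0_gap:
  assumes "levy_profile TYPE('a::euclidean_space) \<nu>" "0 < s" "s < s'"
  shows "h0 TYPE('a) \<nu> s' + (1 - (s / s')\<^sup>2) * K0 TYPE('a) \<nu> s \<le> h0 TYPE('a) \<nu> s"
proof -
  note [measurable] = borel_measurable_ball_moment_integrand[OF levy_profile_antimono[OF assms(1)]]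
    borel_measurable_h0_integrand[OF levy_profile_antimono[OF assms(1)]]
  let ?c = "1/s\<^sup>2 - 1/s'\<^sup>2"
  let ?H = "\<lambda>r (x::'a). ennreal (min 1 ((norm x)\<^sup>2 / r\<^sup>2)) * \<nu> (norm x)"
  let ?M = "\<lambda>x::'a. indicator {x. norm x < s} x * ennreal ((norm x)\<^sup>2) * \<nu> (norm x)"
  have s': "0 < s'" "s\<^sup>2 < s'\<^sup>2" using assms by (auto intro: power_strict_mono)
  then have c: "0 \<le> ?c" using assms by (simp add: field_simps)
  have "ennreal (h0 TYPE('a) \<nu> s') + ennreal ?c * ennreal (s\<^sup>2 * K0 TYPE('a) \<nu> s)
      = (\<integral>\<^sup>+ x. ?H s' x + ennreal ?c * ?M x \<partial>lborel)"
    using assms s' by (simp add: ennreal_h0 ball_moment_eq_K0[symmetric] ball_moment_def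
        nn_integral_add nn_integral_cmult)
  also have "\<dots> \<le> ennreal (h0 TYPE('a) \<nu> s)"
    using assms by (simp add: ennreal_h0 nn_integral_mono h0_integrand_gap[OF assms(2,3)])
  finally have "h0 TYPE('a) \<nu> s' + ?c * (s\<^sup>2 * K0 TYPE('a) \<nu> s) \<le> h0 TYPE('a) \<nu> s"
    using c by (simp add: ennreal_mult'[symmetric] ennreal_plus[symmetric] ennreal_le_iff
        h0_nonneg K0_nonneg del: ennreal_plus)
  moreover have "?c * s\<^sup>2 = 1 - (s / s')\<^sup>2" using assms by (simp add: power_divide field_simps)
  ultimately show ?thesis by (simp add: mult.assoc[symmetric])
qed

lemma h0_strict_antimono:
  assumes "levy_profile TYPE('a::euclidean_space) \<nu>" "0 < s" "s < s'"
  shows "h0 TYPE('a) \<nu> s' < h0 TYPE('a) \<nu> s"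
proof -
  have "(s / s')\<^sup>2 < 1" using assms by (simp add: power_less_one_iff)
  then have "0 < (1 - (s / s')\<^sup>2) * K0 TYPE('a) \<nu> s" using K0_pos[OF assms(1,2)] by simp
  then show ?thesis using h0_K0_gap[OF assms] by linarith
qed

lemma h0_scale_bounds:
  assumes "levy_profile TYPE('a::euclidean_space) \<nu>" "0 < r0" "0 < r"
  shows "min 1 ((r0 / r)\<^sup>2) * h0 TYPE('a) \<nu> r0 \<le> h0 TYPE('a) \<nu> r"
    and "h0 TYPE('a) \<nu> r \<le> max 1 ((r0 / r)\<^sup>2) * h0 TYPE('a) \<nu> r0"
proof -
  let ?h = "h0 TYPE('a) \<nu>"
  have "min 1 ((r0 / r)\<^sup>2) * ?h r0 \<le> ?h r \<and> ?h r \<le> max 1 ((r0 / r)\<^sup>2) * ?h r0"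
  proof (cases "r0 \<le> r")
    case True
    have "(r0 / r)\<^sup>2 * ?h r0 \<le> ?h r"
      using h0_mono_sq[OF assms(1,2) True] assms by (simp add: power_divide field_simps)
    moreover have "(r0 / r)\<^sup>2 \<le> 1" using True assms by (simp add: power_le_one)
    ultimately show ?thesis
      using h0_antimono[OF assms(1,2) True] h0_nonneg[of "TYPE('a)" \<nu> r0] by auto
  next
    case False
    have "?h r \<le> (r0 / r)\<^sup>2 * ?h r0"
      using h0_mono_sq[OF assms(1,3)] False assms by (simp add: power_divide field_simps)
    moreover have "1 \<le> (r0 / r)\<^sup>2" using False assms by (simp add: one_le_power)
    ultimately show ?thesis
      using h0_antimono[OF assms(1,3)] False by auto
  qed
  then show "min 1 ((r0 / r)\<^sup>2) * ?h r0 \<le> ?h r" "?h r \<le> max 1 ((r0 / r)\<^sup>2) * ?h r0" by auto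
qed

lemma isCont_h0:
  assumes "levy_profile TYPE('a::euclidean_space) \<nu>" "0 < r0"
  shows "isCont (h0 TYPE('a) \<nu>) r0"
proof -
  let ?h = "h0 TYPE('a) \<nu>"
  have pos: "eventually (\<lambda>r. 0 < r) (at r0)"
    using order_tendstoD(1)[OF tendsto_ident_at assms(2)] by simp
  have "((\<lambda>r. (r0 / r)\<^sup>2) \<longlongrightarrow> (r0 / r0)\<^sup>2) (at r0)"
    using assms(2) by (intro tendsto_intros) auto
  then have ratio: "((\<lambda>r. (r0 / r)\<^sup>2) \<longlongrightarrow> 1) (at r0)"
    using assms(2) by simp
  have lower: "((\<lambda>r. min 1 ((r0 / r)\<^sup>2) * ?h r0) \<longlongrightarrow> min 1 1 * ?h r0) (at r0)"
    by (rule tendsto_mult_right[OF tendsto_min[OF tendsto_const ratio]])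
  have upper: "((\<lambda>r. max 1 ((r0 / r)\<^sup>2) * ?h r0) \<longlongrightarrow> max 1 1 * ?h r0) (at r0)"
    by (rule tendsto_mult_right[OF tendsto_max[OF tendsto_const ratio]])
  have "eventually (\<lambda>r. min 1 ((r0 / r)\<^sup>2) * ?h r0 \<le> ?h r) (at r0)"
    "eventually (\<lambda>r. ?h r \<le> max 1 ((r0 / r)\<^sup>2) * ?h r0) (at r0)"
    using h0_scale_bounds[OF assms] by (simp_all add: eventually_mono[OF pos])
  from tendsto_sandwich[OF this lower[simplified] upper[simplified]]
  have "(?h \<longlongrightarrow> ?h r0) (at r0)" .
  then show ?thesis by (simp add: isCont_def)
qed

lemma ex_h0_gt:
  assumes "levy_profile TYPE('a::euclidean_space) \<nu>"
  shows "\<exists>s>0. v < h0 TYPE('a) \<nu> s"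
proof (rule ccontr)
  assume "\<not> (\<exists>s>0. v < h0 TYPE('a) \<nu> s)"
  then have bounded: "h0 TYPE('a) \<nu> s \<le> v" if "0 < s" for s using that by (meson not_less)
  note [measurable] = borel_measurable_radial[OF levy_profile_antimono[OF assms]]
  define f where "f k x = ennreal (min 1 ((real k + 1)\<^sup>2 * (norm (x::'a))\<^sup>2)) * \<nu> (norm x)" for k x
  have f_h0: "integral\<^sup>N lborel (f k) = ennreal (h0 TYPE('a) \<nu> (1 / (real k + 1)))" for k
    unfolding f_def by (subst ennreal_h0[OF assms]) (auto simp: power_divide mult.commute)
  have f_meas: "f k \<in> borel_measurable lborel" for k
    unfolding f_def by measurable
  have f_inc: "incseq f"
    unfolding f_def by (intro incseq_SucI le_funI mult_right_mono ennreal_leI min.mono power_mono) auto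
  have "AE x in lborel. \<nu> (norm (x::'a)) \<le> (SUP k. f k x)"
    using AE_lborel_singleton[of "0::'a"]
  proof eventually_elim
    case (elim x)
    then have "0 < norm x" by simp
    obtain k :: nat where "1 / norm x < real k" using reals_Archimedean2 by blast
    then have "1 < real k * norm x" using \<open>0 < norm x\<close> by (simp add: field_simps)
    moreover have "real k * norm x \<le> (real k + 1) * norm x" by (simp add: distrib_right)
    ultimately have "1 \<le> (real k + 1) * norm x" by linarith
    then have "1 \<le> ((real k + 1) * norm x)\<^sup>2" by (simp add: one_le_power)
    then have "f k x = \<nu> (norm x)" unfolding f_def by (simp add: power_mult_distrib)
    then show ?case by (metis SUP_upper UNIV_I)
  qed
  then have "(\<integral>\<^sup>+ x. \<nu> (norm (x::'a)) \<partial>lborel) \<le> (\<integral>\<^sup>+ x. (SUP k. f k x) \<partial>lborel)"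
    by (rule nn_integral_mono_AE)
  also have "\<dots> = (SUP k. integral\<^sup>N lborel (f k))"
    by (rule nn_integral_monotone_convergence_SUP[OF f_inc f_meas])
  also have "\<dots> \<le> ennreal v"
    unfolding f_h0 using bounded by (intro SUP_least) (simp add: ennreal_leI)
  finally show False using assms unfolding levy_profile_def by (auto simp: top_unique)
qed

lemma AE_h0_integrand_INF_zero:
  assumes "levy_profile TYPE('a::euclidean_space) \<nu>"
  shows "AE x in lborel. (INF k::nat. ennreal (min 1 ((norm (x::'a))\<^sup>2 / (real k + 1)\<^sup>2)) * \<nu> (norm x)) = 0"
proof -
  have "(\<lambda>x::'a. ennreal (min 1 ((norm x)\<^sup>2)) * \<nu> (norm x)) \<in> borel_measurable lborel"
    using borel_measurable_h0_integrand[OF levy_profile_antimono[OF assms], of 1] by simp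
  then have "AE x in lborel. ennreal (min 1 ((norm (x::'a))\<^sup>2)) * \<nu> (norm x) \<noteq> \<infinity>"
    by (rule nn_integral_noteq_infinite) (use assms in \<open>auto simp: levy_profile_def\<close>)
  with AE_lborel_singleton[of "0::'a"] show ?thesis
  proof eventually_elim
    case (elim x)
    then have "ennreal (min 1 ((norm x)\<^sup>2)) \<noteq> 0" by (simp add: min_def)
    then have "\<nu> (norm x) \<noteq> \<infinity>" using elim(2) by (auto simp: ennreal_mult_eq_top_iff)
    then obtain q where q: "\<nu> (norm x) = ennreal q" "0 \<le> q" by (cases "\<nu> (norm x)") auto
    have "(INF k::nat. ennreal (min 1 ((norm x)\<^sup>2 / (real k + 1)\<^sup>2)) * \<nu> (norm x)) \<le> 0 + ennreal e"
      if "0 < e" for e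
    proof -
      obtain k :: nat where "(norm x)\<^sup>2 * q / e < real k" using reals_Archimedean2 by blast
      then have "(norm x)\<^sup>2 * q < e * real k" using that by (simp add: field_simps)
      moreover have "e * real k \<le> e * (real k + 1)\<^sup>2"
        using that mult_nonneg_nonneg[of "real k" "real k"]
        by (intro mult_left_mono) (auto simp: power2_eq_square algebra_simps)
      ultimately have "(norm x)\<^sup>2 * q \<le> e * (real k + 1)\<^sup>2" by linarith
      then have "(norm x)\<^sup>2 / (real k + 1)\<^sup>2 * q \<le> e" by (simp add: field_simps)
      moreover have "min 1 ((norm x)\<^sup>2 / (real k + 1)\<^sup>2) * q \<le> (norm x)\<^sup>2 / (real k + 1)\<^sup>2 * q"
        using q by (intro mult_right_mono) auto
      ultimately show ?thesis
        unfolding q by (intro INF_lower2[of k]) (auto simp: ennreal_mult'[symmetric] ennreal_leI)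
    qed
    then show ?case by (metis ennreal_le_epsilon le_zero_eq)
  qed
qed

lemma ex_h0_lt:
  assumes "levy_profile TYPE('a::euclidean_space) \<nu>" "0 < v"
  shows "\<exists>s>0. h0 TYPE('a) \<nu> s < v"
proof -
  define g where "g k x = ennreal (min 1 ((norm (x::'a))\<^sup>2 / (real k + 1)\<^sup>2)) * \<nu> (norm x)" for k x
  have g_h0: "integral\<^sup>N lborel (g k) = ennreal (h0 TYPE('a) \<nu> (real k + 1))" for k
    unfolding g_def by (subst ennreal_h0[OF assms(1)]) auto
  have "(INF k. integral\<^sup>N lborel (g k)) = (\<integral>\<^sup>+ x. (INF k. g k x) \<partial>lborel)"
  proof (rule nn_integral_monotone_convergence_INF_AE[where i=0, symmetric])
    show "AE x in lborel. g (Suc k) x \<le> g k x" for k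
      unfolding g_def by (intro AE_I2 mult_right_mono ennreal_leI min.mono divide_left_mono power_mono) auto
    show "g k \<in> borel_measurable lborel" for k
      unfolding g_def using borel_measurable_h0_integrand[OF levy_profile_antimono[OF assms(1)]] by simp
    show "integral\<^sup>N lborel (g 0) < \<infinity>" by (simp add: g_h0)
  qed
  also have "\<dots> = 0"
    using AE_h0_integrand_INF_zero[OF assms(1)] unfolding g_def by (simp add: nn_integral_cong_AE)
  finally have "(INF k. integral\<^sup>N lborel (g k)) < ennreal v" using assms(2) by simp
  then obtain k where "ennreal (h0 TYPE('a) \<nu> (real k + 1)) < ennreal v"
    by (auto simp: INF_less_iff g_h0)
  then show ?thesis by (intro exI[of _ "real k + 1"]) (simp add: ennreal_less_iff h0_nonneg)
qed

lemma ex1_h0_eq: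
  assumes "levy_profile TYPE('a::euclidean_space) \<nu>" "0 < v"
  shows "\<exists>!r. 0 < r \<and> h0 TYPE('a) \<nu> r = v"
proof -
  obtain a where a: "0 < a" "v < h0 TYPE('a) \<nu> a" using ex_h0_gt[OF assms(1)] by blast
  obtain b where b: "0 < b" "h0 TYPE('a) \<nu> b < v" using ex_h0_lt[OF assms] by blast
  have "a \<le> b" using h0_antimono[OF assms(1) b(1), of a] a b by fastforce
  moreover have "continuous_on {a..b} (h0 TYPE('a) \<nu>)"
    using a(1) by (intro continuous_at_imp_continuous_on ballI isCont_h0[OF assms(1)]) auto
  ultimately obtain r where "a \<le> r" "h0 TYPE('a) \<nu> r = v"
    using IVT2'[of "h0 TYPE('a) \<nu>" b v a] a b by auto
  moreover have "r = r'" if "0 < r" "0 < r'" "h0 TYPE('a) \<nu> r = h0 TYPE('a) \<nu> r'" for r r'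
    using h0_strict_antimono[OF assms(1), of r r'] h0_strict_antimono[OF assms(1), of r' r] that
    by (cases r r' rule: linorder_cases) auto
  ultimately show ?thesis using a(1) by (intro ex1I[of _ r]) auto
qed

lemma h0_inv:
  assumes "levy_profile TYPE('a::euclidean_space) \<nu>" "0 < v"
  shows "0 < h0_inv TYPE('a) \<nu> v" "h0 TYPE('a) \<nu> (h0_inv TYPE('a) \<nu> v) = v"
  using theI'[OF ex1_h0_eq[OF assms]] unfolding h0_inv_def by auto

lemma h0_inv_antimono:
  assumes "levy_profile TYPE('a::euclidean_space) \<nu>" "0 < v" "v \<le> w"
  shows "h0_inv TYPE('a) \<nu> w \<le> h0_inv TYPE('a) \<nu> v"
  using h0_strict_antimono[OF assms(1) h0_inv(1)[OF assms(1,2)], of "h0_inv TYPE('a) \<nu> w"]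
    h0_inv[OF assms(1,2)] h0_inv[OF assms(1)] assms by fastforce

lemma h0_integrand_split:
  fixes x :: "'a::real_normed_vector"
  assumes "0 < R" "R \<le> r" "\<And>u. R \<le> u \<Longrightarrow> u < r \<Longrightarrow> \<nu> u \<le> ennreal B"
  shows "ennreal (min 1 ((norm x)\<^sup>2 / R\<^sup>2)) * \<nu> (norm x)
     \<le> ennreal (1/R\<^sup>2) * (indicator {x. norm x < R} x * ennreal ((norm x)\<^sup>2) * \<nu> (norm x))
        + ennreal B * indicator (ball 0 r) x + ennreal (min 1 ((norm x)\<^sup>2 / r\<^sup>2)) * \<nu> (norm x)"
    (is "?lhs \<le> ?near + ?mid + ?far")
proof -
  have le_profile: "?lhs \<le> \<nu> (norm x)"
    using mult_right_mono[of "ennreal (min 1 ((norm x)\<^sup>2 / R\<^sup>2))" 1 "\<nu> (norm x)"] by (simp add: ennreal_leI)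
  consider "norm x < R" | "R \<le> norm x" "norm x < r" | "r \<le> norm x" by linarith
  then show ?thesis
  proof cases
    case 1
    have "ennreal (min 1 ((norm x)\<^sup>2 / R\<^sup>2)) \<le> ennreal (1/R\<^sup>2) * ennreal ((norm x)\<^sup>2)"
      by (simp add: ennreal_mult'[symmetric] ennreal_leI)
    then have "?lhs \<le> ?near" using 1 by (simp add: mult_right_mono mult.assoc[symmetric])
    then show ?thesis by (simp add: add.assoc add_increasing2)
  next
    case 2
    then have "?lhs \<le> ?mid" using le_profile assms(3)[of "norm x"] by simp
    then show ?thesis by (simp add: add_increasing2 add_increasing)
  next
    case 3
    then have "(norm x)\<^sup>2 / r\<^sup>2 \<ge> 1" using assms by (simp add: power_mono)
    then have "?far = \<nu> (norm x)" by simp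
    then show ?thesis using le_profile by (simp add: add_increasing)
  qed
qed

lemma h0_le_K0_plus_tail:
  assumes "levy_profile TYPE('a::euclidean_space) \<nu>" "0 < R" "R \<le> r" "0 \<le> B"
    and "\<And>u. R \<le> u \<Longrightarrow> u < r \<Longrightarrow> \<nu> u \<le> ennreal B"
  shows "h0 TYPE('a) \<nu> R \<le> K0 TYPE('a) \<nu> R + B * (unit_ball_vol (real DIM('a)) * r ^ DIM('a)) + h0 TYPE('a) \<nu> r"
proof -
  note [measurable] = borel_measurable_radial[OF levy_profile_antimono[OF assms(1)]]
  have r: "0 < r" using assms by simp
  have "ennreal (h0 TYPE('a) \<nu> R)
      \<le> (\<integral>\<^sup>+ x. ennreal (1/R\<^sup>2) * (indicator {x. norm x < R} x * ennreal ((norm (x::'a))\<^sup>2) * \<nu> (norm x))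
           + ennreal B * indicator (ball 0 r) x + ennreal (min 1 ((norm x)\<^sup>2 / r\<^sup>2)) * \<nu> (norm x) \<partial>lborel)"
    unfolding ennreal_h0[OF assms(1,2)] by (intro nn_integral_mono h0_integrand_split assms)
  also have "\<dots> = ennreal (1/R\<^sup>2) * ball_moment TYPE('a) \<nu> R + ennreal B * emeasure lborel (ball (0::'a) r)
         + ennreal (h0 TYPE('a) \<nu> r)"
  proof -
    have "(\<lambda>x::'a. ennreal (1/R\<^sup>2) * (indicator {x. norm x < R} x * ennreal ((norm x)\<^sup>2) * \<nu> (norm x)))
        \<in> borel_measurable borel" "(\<lambda>x::'a. ennreal B * indicator (ball 0 r) x) \<in> borel_measurable borel"
      by measurable (simp add: borel_measurable_indicator)
    then show ?thesis
      unfolding ennreal_h0[OF assms(1) r] ball_moment_def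
      by (simp add: nn_integral_add nn_integral_cmult nn_integral_cmult_indicator)
  qed
  also have "\<dots> = ennreal (K0 TYPE('a) \<nu> R + B * (unit_ball_vol (real DIM('a)) * r ^ DIM('a)) + h0 TYPE('a) \<nu> r)"
    using assms r by (simp add: ball_moment_eq_K0 emeasure_ball ennreal_mult'[symmetric] ennreal_plus[symmetric]
        K0_nonneg h0_nonneg del: ennreal_plus)
  finally show ?thesis
    by (rule ennreal_le_iff[THEN iffD1, rotated]) (use assms in \<open>simp add: K0_nonneg h0_nonneg\<close>)
qed

definition shift_const :: "nat \<Rightarrow> real \<Rightarrow> real" where
  "shift_const d a = (2 * a) ^ (d + 2) * (1 + unit_ball_vol (real d) / annulus_const d)"

lemma shift_const_ge:
  assumes "1 \<le> a"
  shows "2 ^ (d + 2) \<le> shift_const d a"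
proof -
  have "0 \<le> unit_ball_vol (real d) / annulus_const d"
    unfolding annulus_const_def by (simp add: power_le_one)
  then have "(2 * a) ^ (d + 2) * 1 \<le> shift_const d a"
    unfolding shift_const_def using assms by (intro mult_left_mono) auto
  moreover have "(2::real) ^ (d + 2) \<le> (2 * a) ^ (d + 2)" using assms by (intro power_mono) auto
  ultimately show ?thesis by linarith
qed

lemma K0_div_power_le_beyond:
  assumes "levy_profile TYPE('a::euclidean_space) \<nu>" "1 \<le> a" "0 < s" "s \<le> 2 * a * R" "R \<le> u"
  shows "K0 TYPE('a) \<nu> u / u ^ DIM('a) \<le> (2 * a) ^ (DIM('a) + 2) * (K0 TYPE('a) \<nu> s / s ^ DIM('a))"
proof -
  have "2 * a * R \<le> 2 * a * u" using assms(2,5) by (intro mult_left_mono) auto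
  then have "s \<le> 2 * a * u" using assms(4) by linarith
  then have "s / (2 * a) \<le> u" using assms(2) by (simp add: field_simps)
  then show ?thesis using assms by (intro K0_div_power_almost_antimono) auto
qed

lemma profile_le_beyond:
  assumes "levy_profile TYPE('a::euclidean_space) \<nu>" "1 \<le> a" "0 < s" "s \<le> 2 * a * R" "0 < R" "R \<le> u"
  shows "\<nu> u \<le> ennreal ((2 * a) ^ (DIM('a) + 2) * (K0 TYPE('a) \<nu> s / s ^ DIM('a)) / annulus_const DIM('a))"
proof -
  have "K0 TYPE('a) \<nu> u / (annulus_const DIM('a) * u ^ DIM('a))
      = K0 TYPE('a) \<nu> u / u ^ DIM('a) / annulus_const DIM('a)" by (simp add: mult.commute)
  also have "\<dots> \<le> (2 * a) ^ (DIM('a) + 2) * (K0 TYPE('a) \<nu> s / s ^ DIM('a)) / annulus_const DIM('a)"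
    using K0_div_power_le_beyond[OF assms(1-4,6)] using annulus_const_pos[of "DIM('a)"] by (intro divide_right_mono) simp_all
  finally show ?thesis
    using profile_le_K0[OF assms(1), of u] assms(5,6) by (auto intro: order.trans ennreal_leI)
qed

lemma K0_div_power_ge_h0_inv:
  assumes "levy_profile TYPE('a::euclidean_space) \<nu>" "1 \<le> a" "0 < t"
    and "0 < s" "s \<le> 2 * a * h0_inv TYPE('a) \<nu> (3/t)"
  shows "2 / t \<le> h0_inv TYPE('a) \<nu> (1/t) ^ DIM('a) * (K0 TYPE('a) \<nu> s / s ^ DIM('a)) * shift_const DIM('a) a"
proof -
  let ?d = "DIM('a)" and ?K = "K0 TYPE('a) \<nu>"
  let ?r = "h0_inv TYPE('a) \<nu> (1/t)" and ?R = "h0_inv TYPE('a) \<nu> (3/t)"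
  let ?P = "(2 * a) ^ (?d + 2)" and ?q = "?K s / s ^ ?d"
  define B where "B = ?P * ?q / annulus_const ?d"
  have r: "0 < ?r" "h0 TYPE('a) \<nu> ?r = 1/t" using h0_inv[OF assms(1), of "1/t"] assms(3) by auto
  have R: "0 < ?R" "h0 TYPE('a) \<nu> ?R = 3/t" using h0_inv[OF assms(1), of "3/t"] assms(3) by auto
  have "?R \<le> ?r" using h0_inv_antimono[OF assms(1)] assms(3) by (simp add: divide_right_mono)
  have "0 \<le> B"
    unfolding B_def using assms(2,4) K0_nonneg[of "TYPE('a)" \<nu> s] annulus_const_pos[of ?d] by simp
  from h0_le_K0_plus_tail[OF assms(1) R(1) \<open>?R \<le> ?r\<close> this]
  have "3/t \<le> ?K ?R + B * (unit_ball_vol ?d * ?r ^ ?d) + 1/t"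
    using profile_le_beyond[OF assms(1,2,4,5) R(1)] R(2) r(2) unfolding B_def by simp
  moreover have "?K ?R \<le> ?r ^ ?d * (?P * ?q)"
  proof -
    have "?K ?R = ?R ^ ?d * (?K ?R / ?R ^ ?d)" using R(1) by simp
    also have "\<dots> \<le> ?r ^ ?d * (?P * ?q)"
      using K0_div_power_le_beyond[OF assms(1,2,4,5) order.refl] R(1) \<open>?R \<le> ?r\<close> K0_nonneg[of "TYPE('a)" \<nu> ?R]
      by (intro mult_mono power_mono) auto
    finally show ?thesis .
  qed
  ultimately have "2/t \<le> ?r ^ ?d * (?P * ?q) + B * (unit_ball_vol ?d * ?r ^ ?d)" by simp
  also have "\<dots> = ?r ^ ?d * ?q * shift_const ?d a"
    unfolding shift_const_def B_def using annulus_const_pos[of ?d] assms(4) by (simp add: field_simps)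
  finally show ?thesis .
qed

lemma rho_le: "rho \<nu> t y \<le> (1 / h0_inv TYPE('a) \<nu> (1/t)) ^ DIM('a)"
  for y :: "'a::euclidean_space"
  unfolding rho_def by simp

lemma rho_nonzero:
  "y \<noteq> 0 \<Longrightarrow> rho \<nu> t y = min ((1 / h0_inv TYPE('a) \<nu> (1/t)) ^ DIM('a)) (t * K0 TYPE('a) \<nu> (norm y) / norm y ^ DIM('a))"
  for y :: "'a::euclidean_space"
  unfolding rho_def by simp

lemma rho_nonneg:
  assumes "levy_profile TYPE('a::euclidean_space) \<nu>" "0 < t"
  shows "0 \<le> rho \<nu> t (y::'a)"
  using h0_inv(1)[OF assms(1), of "1/t"] assms(2) K0_nonneg[of "TYPE('a)" \<nu> "norm y"]
  unfolding rho_def by simp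

lemma rho_shift_small:
  fixes x z :: "'a::euclidean_space"
  assumes "levy_profile TYPE('a) \<nu>" "0 < t" "x \<noteq> 0" "norm z \<le> norm x / 2"
  shows "rho \<nu> t (x + z) \<le> 2 ^ (DIM('a) + 2) * rho \<nu> t x"
proof -
  let ?A = "(1 / h0_inv TYPE('a) \<nu> (1/t)) ^ DIM('a)"
  let ?Q = "\<lambda>y::'a. t * K0 TYPE('a) \<nu> (norm y) / norm y ^ DIM('a)"
  have xz: "norm x / 2 \<le> norm (x + z)"
    using norm_triangle_ineq2[of x "-z"] assms(4) by simp
  then have xz0: "x + z \<noteq> 0" using assms(3) by auto
  have "K0 TYPE('a) \<nu> (norm (x + z)) / norm (x + z) ^ DIM('a)
      \<le> 2 ^ (DIM('a) + 2) * (K0 TYPE('a) \<nu> (norm x) / norm x ^ DIM('a))"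
    by (rule K0_div_power_almost_antimono[OF assms(1)]) (use xz assms(3) in auto)
  from mult_left_mono[OF this, of t] have "?Q (x + z) \<le> 2 ^ (DIM('a) + 2) * ?Q x"
    using assms(2) by (simp add: mult_ac)
  then have "rho \<nu> t (x + z) \<le> min ?A (2 ^ (DIM('a) + 2) * ?Q x)"
    unfolding rho_nonzero[OF xz0] by (intro min.mono) auto
  also have "\<dots> \<le> min (2 ^ (DIM('a) + 2) * ?A) (2 ^ (DIM('a) + 2) * ?Q x)"
    using mult_right_mono[OF one_le_power[of "2::real" "DIM('a) + 2"], of ?A]
      h0_inv(1)[OF assms(1), of "1/t"] assms(2) by (intro min.mono) auto
  also have "\<dots> = 2 ^ (DIM('a) + 2) * min ?A (?Q x)"
    by (simp add: min_mult_distrib_left)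
  finally show ?thesis using rho_nonzero[OF assms(3)] by simp
qed

lemma rho_far_lower:
  fixes x :: "'a::euclidean_space"
  assumes "levy_profile TYPE('a) \<nu>" "1 \<le> a" "0 < t"
    and "norm x \<le> 2 * a * h0_inv TYPE('a) \<nu> (3/t)"
  shows "(1 / h0_inv TYPE('a) \<nu> (1/t)) ^ DIM('a) \<le> shift_const DIM('a) a * rho \<nu> t x"
proof -
  let ?r = "h0_inv TYPE('a) \<nu> (1/t)"
  let ?Q = "t * K0 TYPE('a) \<nu> (norm x) / norm x ^ DIM('a)"
  have r: "0 < ?r" using h0_inv(1)[OF assms(1)] assms(3) by simp
  have "1 \<le> shift_const DIM('a) a"
    using shift_const_ge[OF assms(2), of "DIM('a)"] one_le_power[of "2::real" "DIM('a) + 2"] by linarith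
  then have diag: "(1 / ?r) ^ DIM('a) \<le> shift_const DIM('a) a * (1 / ?r) ^ DIM('a)"
    using mult_right_mono[of 1 "shift_const DIM('a) a" "(1 / ?r) ^ DIM('a)"] r by simp
  show ?thesis
  proof (cases "x = 0")
    case False
    have "2 / t \<le> ?r ^ DIM('a) * (K0 TYPE('a) \<nu> (norm x) / norm x ^ DIM('a)) * shift_const DIM('a) a"
      using assms False by (intro K0_div_power_ge_h0_inv) auto
    then have "(1 / ?r) ^ DIM('a) \<le> shift_const DIM('a) a * ?Q"
      using r assms(3) by (simp add: power_one_over field_simps)
    then show ?thesis using diag rho_nonzero[OF False] by (simp add: min_def)
  qed (use diag in \<open>simp add: rho_def\<close>)
qed

theorem proposition6p6:
  fixes a :: real
  assumes "a \<ge> 1"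
  shows "\<exists>c::real. \<forall>\<nu>. levy_profile TYPE('a::euclidean_space) \<nu> \<longrightarrow>
           (\<forall>t>0. \<forall>x z :: 'a.
              norm z \<le> max (a * h0_inv TYPE('a) \<nu> (3/t)) (norm x / 2) \<longrightarrow>
              rho \<nu> t (x + z) \<le> c * rho \<nu> t x)"
proof (intro exI[of _ "shift_const DIM('a) a"] allI impI)
  fix \<nu> t and x z :: 'a
  assume lev: "levy_profile TYPE('a) \<nu>" and t: "0 < t"
    and z: "norm z \<le> max (a * h0_inv TYPE('a) \<nu> (3/t)) (norm x / 2)"
  show "rho \<nu> t (x + z) \<le> shift_const DIM('a) a * rho \<nu> t x"
  proof (cases "x \<noteq> 0 \<and> norm z \<le> norm x / 2")
    case True
    have "2 ^ (DIM('a) + 2) * rho \<nu> t x \<le> shift_const DIM('a) a * rho \<nu> t x"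
      by (intro mult_right_mono rho_nonneg[OF lev t] shift_const_ge[OF assms])
    then show ?thesis using rho_shift_small[OF lev t] True by fastforce
  next
    case False
    then have "norm x \<le> 2 * a * h0_inv TYPE('a) \<nu> (3/t)"
      using z h0_inv(1)[OF lev, of "3/t"] assms t by auto
    then show ?thesis using rho_le order_trans rho_far_lower[OF lev assms t] by blast
  qed
qed

end
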